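(* Let $A$ be a ring, $\delta=(\delta_1,\ldots,\delta_n)$ an $n$-tuple of pairwise commuting derivations of $A$, $d_i\in\mathbb{N}\cup\{\infty\}$, $I=\{\alpha\in\mathbb{N}^n\mid\alpha_i\le d_i\ \forall i\}$, and let $\{x^{[\alpha]}\mid\alpha\in I\}$ be a $\delta$-descent. Then for each $\alpha\in I$, $N_\alpha=\bigoplus_{0\le\beta\le\alpha}A^\delta x^{[\beta]}=\bigoplus_{0\le\beta\le\alpha}x^{[\beta]}A^\delta$.
   Context: $A^\delta=\bigcap_i\ker\delta_i$; $N_\alpha=\bigcap_{i=1}^n\ker\delta_i^{\alpha_i+1}$; $\beta\le\alpha$ means $\beta_i\le\alpha_i$ for all $i$; $\delta^\alpha=\delta_1^{\alpha_1}\cdots\delta_n^{\alpha_n}$. A family $\{x^{[\alpha]}\mid\alpha\in I\}$ is a $\delta$-descent if $x^{[0]}=1$ and $\delta^\alpha(x^{[\beta]})=x^{[\beta-\alpha]}$ for all $\alpha\in\mathbb{N}^n$, $\beta\in I$, where $x^{[\gamma]}:=0$ for $\gamma\in\mathbb{Z}^n\setminus\mathbb{N}^n$. *)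

theory Defs
  imports Main "HOL-Library.Extended_Nat"
begin

definition derivation :: "('a::ring_1 \<Rightarrow> 'a) \<Rightarrow> bool" where
  "derivation D \<longleftrightarrow> (\<forall>a b. D (a + b) = D a + D b \<and> D (a * b) = D a * b + a * D b)"

text \<open>Multi-indices in N^n: functions nat => nat vanishing outside {..<n}
  (coordinate i of the paper corresponds to index i-1 here).\<close>
definition multiidx :: "nat \<Rightarrow> (nat \<Rightarrow> nat) set" where
  "multiidx n = {\<alpha>. \<forall>i\<ge>n. \<alpha> i = 0}"

definition idxset :: "nat \<Rightarrow> (nat \<Rightarrow> enat) \<Rightarrow> (nat \<Rightarrow> nat) set" where
  "idxset n d = {\<alpha> \<in> multiidx n. \<forall>i<n. enat (\<alpha> i) \<le> d i}"

definition dpow :: "nat \<Rightarrow> (nat \<Rightarrow> 'a \<Rightarrow> 'a) \<Rightarrow> (nat \<Rightarrow> nat) \<Rightarrow> 'a \<Rightarrow> 'a" where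
  "dpow n \<delta> \<alpha> = foldr (\<lambda>i f. (\<delta> i ^^ \<alpha> i) \<circ> f) [0..<n] id"

definition consts_of :: "nat \<Rightarrow> (nat \<Rightarrow> 'a::ring_1 \<Rightarrow> 'a) \<Rightarrow> 'a set" where
  "consts_of n \<delta> = {a. \<forall>i<n. \<delta> i a = 0}"

definition Nset :: "nat \<Rightarrow> (nat \<Rightarrow> 'a::ring_1 \<Rightarrow> 'a) \<Rightarrow> (nat \<Rightarrow> nat) \<Rightarrow> 'a set" where
  "Nset n \<delta> \<alpha> = {a. \<forall>i<n. (\<delta> i ^^ (\<alpha> i + 1)) a = 0}"

text \<open>delta-descent; x^[gamma] := 0 for gamma not in N^n, i.e. when alpha is not <= beta.\<close>
definition descent :: "nat \<Rightarrow> (nat \<Rightarrow> 'a::ring_1 \<Rightarrow> 'a) \<Rightarrow> (nat \<Rightarrow> nat) set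
    \<Rightarrow> ((nat \<Rightarrow> nat) \<Rightarrow> 'a) \<Rightarrow> bool" where
  "descent n \<delta> I x \<longleftrightarrow> x (\<lambda>_. 0) = 1 \<and>
     (\<forall>\<alpha>\<in>multiidx n. \<forall>\<beta>\<in>I.
        dpow n \<delta> \<alpha> (x \<beta>) = (if \<alpha> \<le> \<beta> then x (\<beta> - \<alpha>) else 0))"

definition is_direct_sum :: "'a::ab_group_add set \<Rightarrow> 'j set \<Rightarrow> ('j \<Rightarrow> 'a set) \<Rightarrow> bool" where
  "is_direct_sum S J M \<longleftrightarrow>
     S = {(\<Sum>j\<in>J. m j) | m. \<forall>j\<in>J. m j \<in> M j} \<and>
     (\<forall>m. (\<forall>j\<in>J. m j \<in> M j) \<and> (\<Sum>j\<in>J. m j) = 0 \<longrightarrow> (\<forall>j\<in>J. m j = 0))"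

end

theory Submission
  imports Defs
begin

text \<open>An element \<open>a\<close> lies in \<open>N\<^sub>\<alpha>\<close> exactly when \<open>\<delta>\<^sup>\<nu> a = 0\<close> for every
  multi-index \<open>\<nu> \<not>\<le> \<alpha>\<close>. If \<open>\<gamma>\<close> is maximal among the multi-indices not killing \<open>a\<close>, then
  \<open>\<delta>\<^sup>\<gamma> a\<close> is a constant, and subtracting \<open>(\<delta>\<^sup>\<gamma> a) x\<^sup>[\<gamma>]\<close> removes \<open>\<gamma>\<close> from that set; this gives
  the expansion \<open>a = \<Sum> c\<^sub>\<beta> x\<^sup>[\<beta>]\<close>. Conversely, applying \<open>\<delta>\<^sup>\<gamma>\<close> for a maximal \<open>\<gamma>\<close> to a vanishing
  expansion isolates the coefficient \<open>c\<^sub>\<gamma>\<close>, which gives uniqueness. Constants commute with all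
  \<open>\<delta>\<^sup>\<nu>\<close> on either side, so the same argument works for right coefficients.\<close>

lemma funpow_closed:
  assumes "P id" "\<And>f g. P f \<Longrightarrow> P g \<Longrightarrow> P (f \<circ> g)" "P f"
  shows "P (f ^^ k)"
  by (induction k) (simp_all only: funpow.simps assms)

lemma additive_id: "additive id"
  by (simp add: additive_def)

lemma additive_comp: "additive f \<Longrightarrow> additive g \<Longrightarrow> additive (f \<circ> g)"
  by (simp add: additive_def)

lemma additive_funpow:
  fixes f :: "'a::ab_group_add \<Rightarrow> 'a"
  assumes "additive f"
  shows "additive (f ^^ k)"
  by (rule funpow_closed[of additive]) (simp_all add: additive_id additive_comp assms)

subsection \<open>Iterated derivative operators\<close>

lemma dpow_0 [simp]: "dpow 0 \<delta> \<alpha> = id"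
  by (simp add: dpow_def)

lemma foldr_comp_id: "foldr (\<lambda>i f. g i \<circ> f) xs h = foldr (\<lambda>i f. g i \<circ> f) xs id \<circ> h"
  by (induction xs) (simp_all add: o_assoc)

lemma dpow_Suc: "dpow (Suc m) \<delta> \<alpha> = dpow m \<delta> \<alpha> \<circ> (\<delta> m ^^ \<alpha> m)"
  unfolding dpow_def by (simp add: foldr_comp_id[of _ _ "\<delta> m ^^ \<alpha> m"])

lemma dpow_closed:
  assumes "P id" "\<And>f g. P f \<Longrightarrow> P g \<Longrightarrow> P (f \<circ> g)" "\<And>i. i < m \<Longrightarrow> P (\<delta> i)"
  shows "P (dpow m \<delta> \<alpha>)"
  using assms(3)
proof (induction m)
  case (Suc m)
  have "P (dpow m \<delta> \<alpha>)"
    using Suc by simp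
  moreover have "P (\<delta> m)"
    using Suc.prems by simp
  then have "P (\<delta> m ^^ \<alpha> m)"
    using assms(1,2) by (rule funpow_closed[rotated 2])
  ultimately show ?case
    unfolding dpow_Suc by (rule assms(2))
qed (simp add: assms(1))

lemma dpow_zero_index: "dpow m \<delta> (\<lambda>_. 0) = id"
  by (induction m) (simp_all add: dpow_Suc)

lemma dpow_single:
  assumes "i < m"
  shows "dpow m \<delta> (\<lambda>j. if j = i then k else 0) = \<delta> i ^^ k"
proof -
  have "dpow m \<delta> (\<lambda>j. if j = i then k else 0) = (if i < m then \<delta> i ^^ k else id)"
    by (induction m) (auto simp: dpow_Suc less_Suc_eq)
  then show ?thesis using assms by simp
qed

lemma dpow_additive:
  assumes "\<And>i. i < m \<Longrightarrow> additive (\<delta> i)"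
  shows "additive (dpow m \<delta> \<alpha>)"
  by (rule dpow_closed[of additive]) (simp_all add: additive_id additive_comp assms)

lemma dpow_commute:
  assumes "\<And>i y. i < m \<Longrightarrow> \<delta> i (h y) = h (\<delta> i y)"
  shows "dpow m \<delta> \<alpha> (h y) = h (dpow m \<delta> \<alpha> y)"
proof -
  have "dpow m \<delta> \<alpha> \<circ> h = h \<circ> dpow m \<delta> \<alpha>"
    by (rule dpow_closed[where P = "\<lambda>f. f \<circ> h = h \<circ> f"])
       (simp_all add: fun_eq_iff assms)
  then show ?thesis by (simp add: fun_eq_iff)
qed

lemma funpow_commute:
  assumes "f \<circ> g = g \<circ> f"
  shows "f ^^ k \<circ> g = g \<circ> f ^^ k"
  by (rule funpow_closed[where P = "\<lambda>h. h \<circ> g = g \<circ> h"])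
     (use assms in \<open>simp_all add: fun_eq_iff\<close>)

lemma dpow_add:
  assumes "\<forall>i<m. \<forall>j<m. \<delta> i \<circ> \<delta> j = \<delta> j \<circ> \<delta> i" and "\<forall>i<m. \<nu> i = \<alpha> i + \<beta> i"
  shows "dpow m \<delta> \<nu> = dpow m \<delta> \<alpha> \<circ> dpow m \<delta> \<beta>"
  using assms
proof (induction m)
  case (Suc m)
  have IH: "dpow m \<delta> \<nu> = dpow m \<delta> \<alpha> \<circ> dpow m \<delta> \<beta>"
    using Suc.prems less_SucI by (intro Suc.IH) blast+
  have "\<delta> m ^^ k \<circ> \<delta> i = \<delta> i \<circ> \<delta> m ^^ k" if "i < m" for i k
    using Suc.prems(1) lessI less_SucI[OF that] by (intro funpow_commute) blast
  then have "dpow m \<delta> \<beta> ((\<delta> m ^^ k) y) = (\<delta> m ^^ k) (dpow m \<delta> \<beta> y)" for k y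
    by (intro dpow_commute) (metis comp_apply)
  then have swap: "dpow m \<delta> \<beta> \<circ> \<delta> m ^^ \<alpha> m = \<delta> m ^^ \<alpha> m \<circ> dpow m \<delta> \<beta>"
    by (simp add: fun_eq_iff)
  have "\<nu> m = \<alpha> m + \<beta> m"
    using Suc.prems(2) by simp
  then have "dpow (Suc m) \<delta> \<nu> = dpow m \<delta> \<alpha> \<circ> (dpow m \<delta> \<beta> \<circ> \<delta> m ^^ \<alpha> m) \<circ> \<delta> m ^^ \<beta> m"
    by (simp only: dpow_Suc IH funpow_add o_assoc)
  also have "\<dots> = dpow (Suc m) \<delta> \<alpha> \<circ> dpow (Suc m) \<delta> \<beta>"
    by (simp only: swap dpow_Suc o_assoc)
  finally show ?case .
qed simp

lemma derivation_additive: "derivation D \<Longrightarrow> additive D"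
  by (simp add: derivation_def additive_def)

lemma derivation_mult_const_left:
  assumes "derivation D" "D c = 0"
  shows "D (c * y) = c * D y"
proof -
  have "D (c * y) = D c * y + c * D y"
    using assms(1) unfolding derivation_def by blast
  with assms(2) show ?thesis by simp
qed

lemma derivation_mult_const_right:
  assumes "derivation D" "D c = 0"
  shows "D (y * c) = D y * c"
proof -
  have "D (y * c) = D y * c + y * D c"
    using assms(1) unfolding derivation_def by blast
  with assms(2) show ?thesis by simp
qed

context
  fixes n :: nat and \<delta> :: "nat \<Rightarrow> 'a::ring_1 \<Rightarrow> 'a"
  assumes commute: "\<forall>i<n. \<forall>j<n. \<delta> i \<circ> \<delta> j = \<delta> j \<circ> \<delta> i"
begin

lemma dpow_in_consts_of:
  assumes "\<gamma> \<in> multiidx n" and "\<And>\<nu>. \<nu> \<in> multiidx n \<Longrightarrow> \<gamma> < \<nu> \<Longrightarrow> dpow n \<delta> \<nu> a = 0"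
  shows "dpow n \<delta> \<gamma> a \<in> consts_of n \<delta>"
  unfolding consts_of_def
proof (intro CollectI allI impI)
  fix i assume i: "i < n"
  let ?\<nu> = "\<gamma>(i := Suc (\<gamma> i))"
  have "\<delta> i (dpow n \<delta> \<gamma> a) = (dpow n \<delta> (\<lambda>j. if j = i then 1 else 0) \<circ> dpow n \<delta> \<gamma>) a"
    using dpow_single[OF i, of \<delta> 1] by simp
  also have "\<dots> = dpow n \<delta> ?\<nu> a"
    using dpow_add[OF commute, of ?\<nu> "\<lambda>j. if j = i then 1 else 0" \<gamma>] by simp
  also have "\<dots> = 0"
    using assms i by (intro assms(2)) (auto simp: multiidx_def less_fun_def le_fun_def)
  finally show "\<delta> i (dpow n \<delta> \<gamma> a) = 0" .
qed

lemma Nset_iff_dpow: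
  assumes "\<forall>i<n. additive (\<delta> i)"
  shows "a \<in> Nset n \<delta> \<alpha> \<longleftrightarrow> (\<forall>\<nu>\<in>multiidx n. \<not> \<nu> \<le> \<alpha> \<longrightarrow> dpow n \<delta> \<nu> a = 0)"
proof
  assume a: "a \<in> Nset n \<delta> \<alpha>"
  show "\<forall>\<nu>\<in>multiidx n. \<not> \<nu> \<le> \<alpha> \<longrightarrow> dpow n \<delta> \<nu> a = 0"
  proof (intro ballI impI)
    fix \<nu> assume \<nu>: "\<nu> \<in> multiidx n" "\<not> \<nu> \<le> \<alpha>"
    then obtain i where i: "\<alpha> i < \<nu> i" by (auto simp: le_fun_def not_le)
    with \<nu>(1) have "i < n" by (auto simp: multiidx_def intro: ccontr)
    have "(\<delta> i ^^ \<nu> i) a = (\<delta> i ^^ (\<nu> i - Suc (\<alpha> i))) ((\<delta> i ^^ Suc (\<alpha> i)) a)"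
      using i by (metis Suc_leI le_add_diff_inverse2 funpow_add o_apply)
    also have "\<dots> = 0"
      using a \<open>i < n\<close> assms by (simp add: Nset_def additive.zero additive_funpow)
    finally have "(\<delta> i ^^ \<nu> i) a = 0" .
    moreover have "dpow n \<delta> \<nu> = dpow n \<delta> (\<nu>(i := 0)) \<circ> \<delta> i ^^ \<nu> i"
      unfolding dpow_single[OF \<open>i < n\<close>, of \<delta> "\<nu> i", symmetric]
      by (rule dpow_add[OF commute]) simp
    then have "dpow n \<delta> \<nu> a = dpow n \<delta> (\<nu>(i := 0)) ((\<delta> i ^^ \<nu> i) a)"
      by simp
    moreover have "additive (dpow n \<delta> (\<nu>(i := 0)))"
      using assms by (simp add: dpow_additive)
    ultimately show "dpow n \<delta> \<nu> a = 0"
      by (simp add: additive.zero)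
  qed
next
  assume "\<forall>\<nu>\<in>multiidx n. \<not> \<nu> \<le> \<alpha> \<longrightarrow> dpow n \<delta> \<nu> a = 0"
  then have "dpow n \<delta> (\<lambda>j. if j = i then Suc (\<alpha> i) else 0) a = 0" if "i < n" for i
    using that by (auto simp: multiidx_def le_fun_def dest: spec[of _ i])
  then show "a \<in> Nset n \<delta> \<alpha>"
    by (simp add: Nset_def dpow_single)
qed

end

lemma finite_box: "finite {\<beta> \<in> multiidx n. \<beta> \<le> \<alpha>}"
proof (rule finite_subset)
  show "{\<beta> \<in> multiidx n. \<beta> \<le> \<alpha>} \<subseteq>
      {f. \<forall>i. (i \<in> {..<n} \<longrightarrow> f i \<in> (\<Union>j<n. {..\<alpha> j})) \<and> (i \<notin> {..<n} \<longrightarrow> f i = 0)}"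
    by (auto simp: multiidx_def le_fun_def)
qed (rule finite_set_of_finite_funs; simp)

lemma box_subset_idxset: "\<alpha> \<in> idxset n d \<Longrightarrow> {\<beta> \<in> multiidx n. \<beta> \<le> \<alpha>} \<subseteq> idxset n d"
  by (auto simp: idxset_def le_fun_def intro: order_trans[OF enat_ord_simps(1)[THEN iffD2]])

subsection \<open>Expansion in a descent\<close>

text \<open>\<open>scale c\<close> stands for multiplication by a constant \<open>c\<close> on either side, so that the
  left and the right decomposition are both instances of this locale.\<close>

locale descent_expansion =
  fixes n :: nat and \<delta> :: "nat \<Rightarrow> 'a::ring_1 \<Rightarrow> 'a" and I :: "(nat \<Rightarrow> nat) set"
    and x :: "(nat \<Rightarrow> nat) \<Rightarrow> 'a" and scale :: "'a \<Rightarrow> 'a \<Rightarrow> 'a"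
  assumes derivations: "\<forall>i<n. derivation (\<delta> i)"
    and commute: "\<forall>i<n. \<forall>j<n. \<delta> i \<circ> \<delta> j = \<delta> j \<circ> \<delta> i"
    and descent: "descent n \<delta> I x"
    and scale_one [simp]: "scale c 1 = c"
    and scale_zero_left [simp]: "scale 0 y = 0"
    and scale_zero_right [simp]: "scale c 0 = 0"
    and derivation_scale: "c \<in> consts_of n \<delta> \<Longrightarrow> i < n \<Longrightarrow> \<delta> i (scale c y) = scale c (\<delta> i y)"
begin

lemma additive_dpow: "additive (dpow n \<delta> \<nu>)"
  using derivations by (simp add: dpow_additive derivation_additive)

lemma dpow_scale: "c \<in> consts_of n \<delta> \<Longrightarrow> dpow n \<delta> \<nu> (scale c y) = scale c (dpow n \<delta> \<nu> y)"
  by (rule dpow_commute) (simp add: derivation_scale)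

lemma dpow_descent:
  "\<beta> \<in> I \<Longrightarrow> \<nu> \<in> multiidx n \<Longrightarrow> dpow n \<delta> \<nu> (x \<beta>) = (if \<nu> \<le> \<beta> then x (\<beta> - \<nu>) else 0)"
  using descent by (simp add: descent_def)

lemma dpow_descent_self: "\<beta> \<in> I \<Longrightarrow> \<beta> \<in> multiidx n \<Longrightarrow> dpow n \<delta> \<beta> (x \<beta>) = 1"
proof -
  have "\<beta> - \<beta> = (\<lambda>_. 0)" by (simp add: fun_eq_iff)
  then show "\<beta> \<in> I \<Longrightarrow> \<beta> \<in> multiidx n \<Longrightarrow> ?thesis"
    using descent by (simp add: dpow_descent descent_def)
qed

lemma expansion_exists:
  assumes "finite S" "S \<subseteq> I \<inter> multiidx n"
    and "\<And>\<beta> \<nu>. \<beta> \<in> S \<Longrightarrow> \<nu> \<in> multiidx n \<Longrightarrow> \<nu> \<le> \<beta> \<Longrightarrow> \<nu> \<in> S"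
    and "\<And>\<nu>. \<nu> \<in> multiidx n \<Longrightarrow> \<nu> \<notin> S \<Longrightarrow> dpow n \<delta> \<nu> a = 0"
  shows "\<exists>c. (\<forall>\<beta>\<in>S. c \<beta> \<in> consts_of n \<delta>) \<and> a = (\<Sum>\<beta>\<in>S. scale (c \<beta>) (x \<beta>))"
  using assms
proof (induction S arbitrary: a rule: finite_psubset_induct)
  case (psubset S)
  show ?case
  proof (cases "S = {}")
    case True
    then have "a = 0"
      using psubset.prems(3)[of "\<lambda>_. 0"] by (simp add: dpow_zero_index multiidx_def)
    with True show ?thesis by simp
  next
    case False
    obtain \<gamma> where \<gamma>: "\<gamma> \<in> S" and maximal: "\<And>\<beta>. \<beta> \<in> S \<Longrightarrow> \<gamma> \<le> \<beta> \<Longrightarrow> \<gamma> = \<beta>"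
      using finite_has_maximal[OF psubset.hyps(1) False] by blast
    have \<gamma>I: "\<gamma> \<in> I" "\<gamma> \<in> multiidx n"
      using \<gamma> psubset.prems(1) by auto
    define c\<^sub>\<gamma> where "c\<^sub>\<gamma> = dpow n \<delta> \<gamma> a"
    have c\<^sub>\<gamma>: "c\<^sub>\<gamma> \<in> consts_of n \<delta>"
      unfolding c\<^sub>\<gamma>_def using commute \<gamma>I(2)
    proof (rule dpow_in_consts_of)
      fix \<nu> assume "\<nu> \<in> multiidx n" "\<gamma> < \<nu>"
      with maximal have "\<nu> \<notin> S" by fastforce
      with \<open>\<nu> \<in> multiidx n\<close> show "dpow n \<delta> \<nu> a = 0" by (rule psubset.prems(3))
    qed
    have "\<exists>c. (\<forall>\<beta>\<in>S - {\<gamma>}. c \<beta> \<in> consts_of n \<delta>) \<and>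
        a - scale c\<^sub>\<gamma> (x \<gamma>) = (\<Sum>\<beta>\<in>S - {\<gamma>}. scale (c \<beta>) (x \<beta>))"
    proof (rule psubset.IH)
      show "S - {\<gamma>} \<subset> S" "S - {\<gamma>} \<subseteq> I \<inter> multiidx n"
        using \<gamma> psubset.prems(1) by auto
      show "\<nu> \<in> S - {\<gamma>}" if "\<beta> \<in> S - {\<gamma>}" "\<nu> \<in> multiidx n" "\<nu> \<le> \<beta>" for \<beta> \<nu>
        using that psubset.prems(2)[of \<beta> \<nu>] maximal[of \<beta>] by auto
      show "dpow n \<delta> \<nu> (a - scale c\<^sub>\<gamma> (x \<gamma>)) = 0" if \<nu>: "\<nu> \<in> multiidx n" "\<nu> \<notin> S - {\<gamma>}" for \<nu>
      proof (cases "\<nu> = \<gamma>")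
        case True
        then show ?thesis
          using \<gamma>I by (simp add: additive.diff[OF additive_dpow] dpow_scale[OF c\<^sub>\<gamma>]
              dpow_descent_self flip: c\<^sub>\<gamma>_def)
      next
        case False
        with \<nu> have "\<nu> \<notin> S" by blast
        with \<gamma> \<nu>(1) psubset.prems(2) have "\<not> \<nu> \<le> \<gamma>" by blast
        with \<open>\<nu> \<notin> S\<close> \<nu>(1) \<gamma>I show ?thesis
          by (simp add: additive.diff[OF additive_dpow] dpow_scale[OF c\<^sub>\<gamma>] dpow_descent
              psubset.prems(3))
      qed
    qed
    then obtain c where c: "\<forall>\<beta>\<in>S - {\<gamma>}. c \<beta> \<in> consts_of n \<delta>"
      and a: "a - scale c\<^sub>\<gamma> (x \<gamma>) = (\<Sum>\<beta>\<in>S - {\<gamma>}. scale (c \<beta>) (x \<beta>))"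
      by blast
    have "(\<Sum>\<beta>\<in>S. scale ((c(\<gamma> := c\<^sub>\<gamma>)) \<beta>) (x \<beta>))
        = scale c\<^sub>\<gamma> (x \<gamma>) + (\<Sum>\<beta>\<in>S - {\<gamma>}. scale (c \<beta>) (x \<beta>))"
      unfolding sum.remove[OF psubset.hyps(1) \<gamma>] by (auto intro!: sum.cong)
    also have "\<dots> = a"
      using a by (simp add: algebra_simps)
    finally show ?thesis
      using c c\<^sub>\<gamma> by (intro exI[of _ "c(\<gamma> := c\<^sub>\<gamma>)"]) auto
  qed
qed

lemma expansion_unique:
  assumes "finite S" "S \<subseteq> I \<inter> multiidx n" "\<forall>\<beta>\<in>S. c \<beta> \<in> consts_of n \<delta>"
    and "(\<Sum>\<beta>\<in>S. scale (c \<beta>) (x \<beta>)) = 0"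
  shows "\<forall>\<beta>\<in>S. c \<beta> = 0"
  using assms
proof (induction S rule: finite_psubset_induct)
  case (psubset S)
  show ?case
  proof (cases "S = {}")
    case False
    obtain \<gamma> where \<gamma>: "\<gamma> \<in> S" and maximal: "\<And>\<beta>. \<beta> \<in> S \<Longrightarrow> \<gamma> \<le> \<beta> \<Longrightarrow> \<gamma> = \<beta>"
      using finite_has_maximal[OF psubset.hyps(1) False] by blast
    have \<gamma>I: "\<gamma> \<in> I" "\<gamma> \<in> multiidx n"
      using \<gamma> psubset.prems(1) by auto
    have "0 = dpow n \<delta> \<gamma> (\<Sum>\<beta>\<in>S. scale (c \<beta>) (x \<beta>))"
      using psubset.prems(3) additive.zero[OF additive_dpow] by simp
    also have "\<dots> = (\<Sum>\<beta>\<in>S. scale (c \<beta>) (dpow n \<delta> \<gamma> (x \<beta>)))"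
      using psubset.prems(2) by (simp add: additive.sum[OF additive_dpow] dpow_scale)
    also have "\<dots> = (\<Sum>\<beta>\<in>S. if \<beta> = \<gamma> then c \<gamma> else 0)"
    proof (rule sum.cong)
      fix \<beta> assume "\<beta> \<in> S"
      moreover have "\<beta> \<in> I"
        using \<open>\<beta> \<in> S\<close> psubset.prems(1) by blast
      ultimately have "dpow n \<delta> \<gamma> (x \<beta>) = (if \<beta> = \<gamma> then 1 else 0)"
        using maximal[of \<beta>] \<gamma>I dpow_descent_self[OF \<gamma>I] by (auto simp: dpow_descent)
      then show "scale (c \<beta>) (dpow n \<delta> \<gamma> (x \<beta>)) = (if \<beta> = \<gamma> then c \<gamma> else 0)"
        by simp
    qed simp
    also have "\<dots> = c \<gamma>"
      using psubset.hyps(1) \<gamma> by simp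
    finally have "c \<gamma> = 0" ..
    then have "(\<Sum>\<beta>\<in>S - {\<gamma>}. scale (c \<beta>) (x \<beta>)) = 0"
      using psubset.prems(3) sum.remove[OF psubset.hyps(1) \<gamma>, of "\<lambda>\<beta>. scale (c \<beta>) (x \<beta>)"] by simp
    then have "\<forall>\<beta>\<in>S - {\<gamma>}. c \<beta> = 0"
      using \<gamma> psubset.prems(1,2) by (intro psubset.IH) auto
    with \<open>c \<gamma> = 0\<close> show ?thesis by blast
  qed simp
qed

lemma is_direct_sum_Nset:
  assumes box: "{\<beta> \<in> multiidx n. \<beta> \<le> \<alpha>} \<subseteq> I"
  shows "is_direct_sum (Nset n \<delta> \<alpha>) {\<beta> \<in> multiidx n. \<beta> \<le> \<alpha>}
           (\<lambda>\<beta>. (\<lambda>c. scale c (x \<beta>)) ` consts_of n \<delta>)"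
proof -
  let ?J = "{\<beta> \<in> multiidx n. \<beta> \<le> \<alpha>}"
  have J: "finite ?J" "?J \<subseteq> I \<inter> multiidx n"
    using finite_box box by auto
  have Nset: "a \<in> Nset n \<delta> \<alpha> \<longleftrightarrow> (\<forall>\<nu>\<in>multiidx n. \<nu> \<notin> ?J \<longrightarrow> dpow n \<delta> \<nu> a = 0)" for a
    using Nset_iff_dpow[OF commute] derivations by (simp add: derivation_additive)
  have coefficients: "\<exists>c. \<forall>\<beta>\<in>?J. c \<beta> \<in> consts_of n \<delta> \<and> m \<beta> = scale (c \<beta>) (x \<beta>)"
    if "\<forall>\<beta>\<in>?J. m \<beta> \<in> (\<lambda>c. scale c (x \<beta>)) ` consts_of n \<delta>" for m
    using that unfolding image_iff Bex_def by (rule bchoice)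
  have expansions: "{\<Sum>\<beta>\<in>?J. m \<beta> | m. \<forall>\<beta>\<in>?J. m \<beta> \<in> (\<lambda>c. scale c (x \<beta>)) ` consts_of n \<delta>}
      = {\<Sum>\<beta>\<in>?J. scale (c \<beta>) (x \<beta>) | c. \<forall>\<beta>\<in>?J. c \<beta> \<in> consts_of n \<delta>}"
  proof (intro set_eqI iffI)
    fix a assume "a \<in> {\<Sum>\<beta>\<in>?J. m \<beta> | m. \<forall>\<beta>\<in>?J. m \<beta> \<in> (\<lambda>c. scale c (x \<beta>)) ` consts_of n \<delta>}"
    then obtain m where "\<forall>\<beta>\<in>?J. m \<beta> \<in> (\<lambda>c. scale c (x \<beta>)) ` consts_of n \<delta>" "a = sum m ?J"
      by blast
    with coefficients obtain c where "\<forall>\<beta>\<in>?J. c \<beta> \<in> consts_of n \<delta> \<and> m \<beta> = scale (c \<beta>) (x \<beta>)"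
      by blast
    with \<open>a = sum m ?J\<close> show "a \<in> {\<Sum>\<beta>\<in>?J. scale (c \<beta>) (x \<beta>) | c. \<forall>\<beta>\<in>?J. c \<beta> \<in> consts_of n \<delta>}"
      by (auto intro!: exI[of _ c] sum.cong)
  qed blast
  show ?thesis
  unfolding is_direct_sum_def expansions
  proof (intro conjI allI impI set_eqI iffI)
    fix a assume "a \<in> Nset n \<delta> \<alpha>"
    then have "\<exists>c. (\<forall>\<beta>\<in>?J. c \<beta> \<in> consts_of n \<delta>) \<and> a = (\<Sum>\<beta>\<in>?J. scale (c \<beta>) (x \<beta>))"
      using J by (intro expansion_exists) (auto simp: Nset intro: order_trans)
    then show "a \<in> {\<Sum>\<beta>\<in>?J. scale (c \<beta>) (x \<beta>) | c. \<forall>\<beta>\<in>?J. c \<beta> \<in> consts_of n \<delta>}"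
      by blast
  next
    fix a assume "a \<in> {\<Sum>\<beta>\<in>?J. scale (c \<beta>) (x \<beta>) | c. \<forall>\<beta>\<in>?J. c \<beta> \<in> consts_of n \<delta>}"
    then obtain c where c: "\<forall>\<beta>\<in>?J. c \<beta> \<in> consts_of n \<delta>"
      and a: "a = (\<Sum>\<beta>\<in>?J. scale (c \<beta>) (x \<beta>))"
      by blast
    have "dpow n \<delta> \<nu> a = 0" if "\<nu> \<in> multiidx n" "\<nu> \<notin> ?J" for \<nu>
      unfolding a additive.sum[OF additive_dpow]
    proof (intro sum.neutral ballI)
      fix \<beta> assume "\<beta> \<in> ?J"
      with that have "\<not> \<nu> \<le> \<beta>" by (auto intro: order_trans)
      with \<open>\<beta> \<in> ?J\<close> that(1) J(2) c show "dpow n \<delta> \<nu> (scale (c \<beta>) (x \<beta>)) = 0"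
        by (auto simp: dpow_scale dpow_descent)
    qed
    then show "a \<in> Nset n \<delta> \<alpha>"
      by (simp add: Nset)
  next
    fix m assume m: "(\<forall>\<beta>\<in>?J. m \<beta> \<in> (\<lambda>c. scale c (x \<beta>)) ` consts_of n \<delta>) \<and> (\<Sum>\<beta>\<in>?J. m \<beta>) = 0"
    with coefficients obtain c where c: "\<forall>\<beta>\<in>?J. c \<beta> \<in> consts_of n \<delta> \<and> m \<beta> = scale (c \<beta>) (x \<beta>)"
      by blast
    then have "(\<Sum>\<beta>\<in>?J. scale (c \<beta>) (x \<beta>)) = sum m ?J"
      by (intro sum.cong) auto
    with m have "(\<Sum>\<beta>\<in>?J. scale (c \<beta>) (x \<beta>)) = 0"
      by simp
    with J c have "\<forall>\<beta>\<in>?J. c \<beta> = 0"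
      by (intro expansion_unique) auto
    with c show "\<forall>\<beta>\<in>?J. m \<beta> = 0"
      by simp
  qed
qed

end

theorem lemma2p1:
  fixes n :: nat and \<delta> :: "nat \<Rightarrow> 'a::ring_1 \<Rightarrow> 'a" and d :: "nat \<Rightarrow> enat"
    and x :: "(nat \<Rightarrow> nat) \<Rightarrow> 'a"
  assumes der: "\<forall>i<n. derivation (\<delta> i)"
    and comm: "\<forall>i<n. \<forall>j<n. \<delta> i \<circ> \<delta> j = \<delta> j \<circ> \<delta> i"
    and desc: "descent n \<delta> (idxset n d) x"
    and \<alpha>: "\<alpha> \<in> idxset n d"
  shows "is_direct_sum (Nset n \<delta> \<alpha>) {\<beta> \<in> multiidx n. \<beta> \<le> \<alpha>}
           (\<lambda>\<beta>. (\<lambda>c. c * x \<beta>) ` consts_of n \<delta>)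
       \<and> is_direct_sum (Nset n \<delta> \<alpha>) {\<beta> \<in> multiidx n. \<beta> \<le> \<alpha>}
           (\<lambda>\<beta>. (\<lambda>c. x \<beta> * c) ` consts_of n \<delta>)"
proof -
  interpret left: descent_expansion n \<delta> "idxset n d" x "\<lambda>c y. c * y"
    using der comm desc by unfold_locales (simp_all add: consts_of_def derivation_mult_const_left)
  interpret right: descent_expansion n \<delta> "idxset n d" x "\<lambda>c y. y * c"
    using der comm desc by unfold_locales (simp_all add: consts_of_def derivation_mult_const_right)
  show ?thesis
    using left.is_direct_sum_Nset right.is_direct_sum_Nset box_subset_idxset[OF \<alpha>] by simp
qed

end
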